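(* Let $A$ be a nonzero $n\times n$ matrix over $\mathbb{C}$ (or $\mathbb{R}$). Then $A^2\otimes A=A\otimes A^2$ if and only if $A^2=\mu A$ for some scalar $\mu$.
   Context: Here $\otimes$ denotes the Kronecker product of matrices: for $A=[a_{ij}]$, $A\otimes B$ is the block matrix whose $(i,j)$ block is $a_{ij}B$. *)

theory Defs
  imports "HOL-Analysis.Analysis"
begin

text \<open>Kronecker product of square matrices indexed by a finite type 'n.
  The result is indexed by pairs: row r=(i,k), column c=(j,l), entry A(i,j) * B(k,l),
  i.e. the (i,j) block is A(i,j) B.\<close>
definition kron :: "'a::times ^'n ^'n \<Rightarrow> 'a ^'n ^'n \<Rightarrow> 'a ^('n \<times> 'n) ^('n \<times> 'n)"
  (infixl "\<otimes>\<^sub>K" 70) where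
  "A \<otimes>\<^sub>K B = (\<chi> r c. A $ fst r $ fst c * B $ snd r $ snd c)"

end

theory Submission
  imports Defs
begin

text \<open>Comparing the entries in row (i,k), column (j,l) shows that B \<otimes> A = A \<otimes> B means
  B(i,j) A(k,l) = A(i,j) B(k,l) for all indices. Dividing by a nonzero entry A(k,l) gives
  B = (B(k,l) / A(k,l)) A; the theorem is the case B = A ** A, over any field.\<close>

lemma kron_commute_iff:
  fixes A B :: "'a::times ^'n ^'n"
  shows "B \<otimes>\<^sub>K A = A \<otimes>\<^sub>K B \<longleftrightarrow> (\<forall>i j k l. B$i$j * A$k$l = A$i$j * B$k$l)"
  by (auto simp: kron_def vec_eq_iff)

lemma kron_commute_iff_scalar_multiple:
  fixes A B :: "'a::field ^'n ^'n"
  assumes "A \<noteq> 0"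
  shows "B \<otimes>\<^sub>K A = A \<otimes>\<^sub>K B \<longleftrightarrow> (\<exists>\<mu>. B = (\<chi> i j. \<mu> * A$i$j))"
proof
  obtain k l where nonzero: "A$k$l \<noteq> 0"
    using assms by (metis vec_eq_iff zero_index)
  assume "B \<otimes>\<^sub>K A = A \<otimes>\<^sub>K B"
  then have "\<And>i j. B$i$j * A$k$l = A$i$j * B$k$l"
    by (simp add: kron_commute_iff)
  then have "B = (\<chi> i j. (B$k$l / A$k$l) * A$i$j)"
    using nonzero by (simp add: vec_eq_iff eq_divide_eq)
  then show "\<exists>\<mu>. B = (\<chi> i j. \<mu> * A$i$j)" ..
next
  assume "\<exists>\<mu>. B = (\<chi> i j. \<mu> * A$i$j)"
  then show "B \<otimes>\<^sub>K A = A \<otimes>\<^sub>K B"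
    by (auto simp: kron_commute_iff ac_simps)
qed

theorem lemma2p6:
  shows "(\<forall>A :: complex ^'n ^'n. A \<noteq> 0 \<longrightarrow>
            ((A ** A) \<otimes>\<^sub>K A = A \<otimes>\<^sub>K (A ** A) \<longleftrightarrow>
             (\<exists>\<mu>::complex. A ** A = (\<chi> i j. \<mu> * A $ i $ j))))
       \<and> (\<forall>A :: real ^'n ^'n. A \<noteq> 0 \<longrightarrow>
            ((A ** A) \<otimes>\<^sub>K A = A \<otimes>\<^sub>K (A ** A) \<longleftrightarrow>
             (\<exists>\<mu>::real. A ** A = (\<chi> i j. \<mu> * A $ i $ j))))"
  by (simp add: kron_commute_iff_scalar_multiple)

end
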